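(* Consider the system of ordinary differential equations in $\mathbb{R}^3$ $$\dot x = \vartheta,\qquad \dot\vartheta = -\lambda\vartheta - xu + x - x^3,\qquad \dot u = -\alpha u - \beta x\vartheta,$$ with real parameters $\alpha>0$, $\lambda = 0$ and $\beta>0$. Then every separatrix of the saddle $x=\vartheta=u=0$, i.e. every solution $(x(t),\vartheta(t),u(t))$, not identically zero, with $$\lim_{t\to-\infty}x(t)=\lim_{t\to-\infty}\vartheta(t)=\lim_{t\to-\infty}u(t)=0,$$ tends to infinity as $t\to+\infty$ (it has no $\omega$-limit points).
   Context: For $\alpha>0$, $\lambda=0$ the origin is a saddle equilibrium with a one-dimensional unstable manifold (eigenvalues $1,-1,-\alpha$); a separatrix is a nontrivial solution lying on this unstable manifold. *)

theory Defs
  imports "HOL-Analysis.Analysis"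
begin

definition rhs :: "real \<Rightarrow> real \<Rightarrow> real \<Rightarrow> real \<times> real \<times> real \<Rightarrow> real \<times> real \<times> real" where
  "rhs \<alpha> lam \<beta> p = (case p of (x, \<theta>, u) \<Rightarrow>
      (\<theta>, - lam * \<theta> - x * u + x - x ^ 3, - \<alpha> * u - \<beta> * x * \<theta>))"

definition solves_on :: "real \<Rightarrow> real \<Rightarrow> real \<Rightarrow> (real \<Rightarrow> real \<times> real \<times> real) \<Rightarrow> real set \<Rightarrow> bool" where
  "solves_on \<alpha> lam \<beta> \<phi> T \<longleftrightarrow>
     (\<forall>t\<in>T. (\<phi> has_vector_derivative rhs \<alpha> lam \<beta> (\<phi> t)) (at t))"

text \<open>Filter for approaching the right end b of the existence interval (-inf, b).\<close>
definition right_end :: "ereal \<Rightarrow> real filter" where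
  "right_end b = (if b = \<infinity> then at_top else at_left (real_of_ereal b))"

end

theory Submission
  imports Defs
begin

(* For lambda = 0 the energy E = theta^2/2 - x^2/2 + x^4/4 - u^2/(2 beta) satisfies
   E' = (alpha/beta) u^2 >= 0 along solutions.  On a separatrix E tends to 0 at -infinity, so
   E >= 0, and E is somewhere positive: otherwise u vanishes identically, the solution consists
   of rest points, and the only rest point of energy 0 is the origin.
   If the existence interval ends at a finite time, the solution must blow up there: a growth
   bound keeps it in a fixed ball near the end point, and Picard iteration would then continue it.
   If the solution exists for all forward times but does not tend to infinity, some sequence of
   states converges to a point q, whose energy is the supremum of E > 0.  By continuous
   dependence on initial data, the solution through q has constant energy for a short time;
   constant energy forces u = 0, so that solution is a rest point and has energy 0 or -1/4. *)

section \<open>Autonomous differential equations\<close>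

lemma has_vector_derivative_fst:
  "(f has_vector_derivative v) F \<Longrightarrow> ((\<lambda>t. fst (f t)) has_vector_derivative fst v) F"
  unfolding has_vector_derivative_def by (drule has_derivative_fst) simp

lemma has_vector_derivative_snd:
  "(f has_vector_derivative v) F \<Longrightarrow> ((\<lambda>t. snd (f t)) has_vector_derivative snd v) F"
  unfolding has_vector_derivative_def by (drule has_derivative_snd) simp

lemma has_real_derivative_norm_power2:
  fixes y :: "real \<Rightarrow> 'a::real_inner"
  assumes "(y has_vector_derivative v) (at t within S)"
  shows "((\<lambda>t. (norm (y t))\<^sup>2) has_real_derivative 2 * inner (y t) v) (at t within S)"
proof -
  have "((\<lambda>t. inner (y t) (y t)) has_derivative
      (\<lambda>h. inner (y t) (h *\<^sub>R v) + inner (h *\<^sub>R v) (y t))) (at t within S)"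
    using assms unfolding has_vector_derivative_def by (intro has_derivative_inner)
  moreover have "(\<lambda>h. inner (y t) (h *\<^sub>R v) + inner (h *\<^sub>R v) (y t)) = (\<lambda>h. (2 * inner (y t) v) * h)"
    by (auto simp: inner_commute algebra_simps)
  ultimately show ?thesis unfolding has_field_derivative_def power2_norm_eq_inner by simp
qed

lemma has_real_derivative_locally_constant:
  fixes g :: "real \<Rightarrow> real"
  assumes "open U" "s \<in> U" "\<And>t. t \<in> U \<Longrightarrow> g t = c" "(g has_real_derivative d) (at s)"
  shows "d = 0"
proof -
  have "(g has_real_derivative 0) (at s)"
    by (rule has_field_derivative_transform_within_open[OF DERIV_const assms(1,2)]) (use assms(3) in auto)
  then show ?thesis using DERIV_unique assms(4) by blast
qed

lemma solution_norm_bound: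
  fixes f :: "'a::real_inner \<Rightarrow> 'a" and y :: "real \<Rightarrow> 'a"
  assumes growth: "\<And>p. inner p (f p) \<le> K * (1 + (norm p)\<^sup>2)\<^sup>2" and "K > 0"
    and sol: "\<And>r. r \<in> {s..t} \<Longrightarrow> (y has_vector_derivative f (y r)) (at r)"
    and "s \<le> t" and "norm (y s) \<le> M" and "t - s \<le> 1 / (4 * K * (1 + M\<^sup>2))"
  shows "norm (y t) \<le> 2 * M + 2"
proof -
  define N where "N = (\<lambda>r. 1 + (norm (y r))\<^sup>2)"
  define N0 where "N0 = 1 + M\<^sup>2"
  have N_ge: "N r \<ge> 1" for r unfolding N_def by simp
  have M0: "M \<ge> 0" using \<open>norm (y s) \<le> M\<close> norm_ge_zero order_trans by blast
  have "N s \<le> N0"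
    unfolding N_def N0_def using \<open>norm (y s) \<le> M\<close> by (simp add: power_mono)
  have "inverse (N s) + 2 * K * s \<le> inverse (N t) + 2 * K * t"
  proof (rule DERIV_nonneg_imp_nondecreasing[OF \<open>s \<le> t\<close>])
    fix r assume r: "s \<le> r" "r \<le> t"
    define I where "I = inner (y r) (f (y r))"
    have "(N has_real_derivative 0 + 2 * I) (at r)"
      unfolding N_def I_def
      by (intro DERIV_add DERIV_const has_real_derivative_norm_power2 sol) (use r in auto)
    then have "((\<lambda>r. inverse (N r) + 2 * K * r) has_real_derivative
        - (2 * I * inverse (N r ^ Suc (Suc 0))) + 2 * K) (at r)"
      by (intro DERIV_add DERIV_inverse_fun) (use N_ge[of r] in \<open>auto intro!: derivative_eq_intros\<close>)
    moreover have "2 * I * inverse (N r ^ Suc (Suc 0)) \<le> 2 * K"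
    proof -
      have "2 * I \<le> 2 * K * (N r)\<^sup>2" using growth[of "y r"] unfolding I_def N_def by simp
      then show ?thesis using N_ge[of r] by (simp add: divide_inverse[symmetric] pos_divide_le_eq power2_eq_square)
    qed
    ultimately show "\<exists>d. ((\<lambda>r. inverse (N r) + 2 * K * r) has_real_derivative d) (at r) \<and> 0 \<le> d"
      by force
  qed
  then have "inverse (N s) - 2 * K * (t - s) \<le> inverse (N t)" by (simp add: algebra_simps)
  moreover have "2 * K * (t - s) \<le> inverse N0 / 2"
  proof -
    have "2 * K * (t - s) \<le> 2 * K * (1 / (4 * K * N0))"
      using assms(6) \<open>K > 0\<close> unfolding N0_def by (intro mult_left_mono) auto
    also have "\<dots> = inverse N0 / 2"
      using \<open>K > 0\<close> unfolding N0_def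
      by (simp add: divide_simps add_pos_nonneg)
    finally show ?thesis .
  qed
  moreover have "inverse N0 \<le> inverse (N s)"
    using \<open>N s \<le> N0\<close> N_ge[of s] by (intro le_imp_inverse_le) auto
  ultimately have "inverse N0 / 2 \<le> inverse (N t)" by linarith
  then have "inverse (2 * N0) \<le> inverse (N t)" by simp
  then have "N t \<le> 2 * N0"
    using N_ge[of t] by (simp add: N0_def add_pos_nonneg)
  then have "(norm (y t))\<^sup>2 \<le> 1 + 2 * M\<^sup>2" unfolding N_def N0_def by simp
  also have "\<dots> \<le> (2 * M + 2)\<^sup>2" using M0 by (simp add: power2_eq_square algebra_simps)
  finally have "(norm (y t))\<^sup>2 \<le> (2 * M + 2)\<^sup>2" .
  then show ?thesis by (rule power2_le_imp_le) (use M0 in simp)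
qed

lemma solutions_dist_le:
  fixes f :: "'a::real_inner \<Rightarrow> 'a" and y z :: "real \<Rightarrow> 'a"
  assumes lip: "L-lipschitz_on (cball 0 R) f" and "a \<le> t"
    and cont_y: "continuous_on {a..t} y" and cont_z: "continuous_on {a..t} z"
    and sol_y: "\<And>r. r \<in> {a<..<t} \<Longrightarrow> (y has_vector_derivative f (y r)) (at r)"
    and sol_z: "\<And>r. r \<in> {a<..<t} \<Longrightarrow> (z has_vector_derivative f (z r)) (at r)"
    and bounded_y: "\<And>r. r \<in> {a..t} \<Longrightarrow> norm (y r) \<le> R"
    and bounded_z: "\<And>r. r \<in> {a..t} \<Longrightarrow> norm (z r) \<le> R"
  shows "norm (y t - z t) \<le> norm (y a - z a) * exp (L * (t - a))"
proof -
  define w where "w = (\<lambda>r. (norm (y r - z r))\<^sup>2 * exp (- (2 * L) * (r - a)))"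
  have "w t \<le> w a"
  proof (rule DERIV_nonpos_imp_decreasing_open[OF \<open>a \<le> t\<close>])
    show "continuous_on {a..t} w" unfolding w_def by (intro continuous_intros cont_y cont_z)
    fix r assume r: "a < r" "r < t"
    define e where "e = y r - z r"
    define d where "d = f (y r) - f (z r)"
    define E where "E = exp (- (2 * L) * (r - a))"
    have "((\<lambda>r. y r - z r) has_vector_derivative d) (at r)"
      unfolding d_def by (intro has_vector_derivative_diff sol_y sol_z) (use r in auto)
    then have "(w has_real_derivative 2 * inner e d * E + E * (- (2 * L)) * (norm e)\<^sup>2) (at r)"
      unfolding w_def e_def E_def
      by (intro DERIV_mult has_real_derivative_norm_power2) (auto intro!: derivative_eq_intros)
    moreover have "inner e d \<le> L * (norm e)\<^sup>2"
    proof -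
      have "r \<in> {a..t}" using r by simp
      then have "norm d \<le> L * norm e"
        unfolding d_def e_def
        by (intro lipschitz_on_normD[OF lip]) (simp_all add: bounded_y bounded_z)
      have "inner e d \<le> norm e * norm d" by (rule norm_cauchy_schwarz)
      also have "\<dots> \<le> norm e * (L * norm e)"
        by (rule mult_left_mono) (simp_all add: \<open>norm d \<le> L * norm e\<close>)
      finally show ?thesis by (simp add: power2_eq_square algebra_simps)
    qed
    then have "2 * inner e d * E + E * (- (2 * L)) * (norm e)\<^sup>2 \<le> 0"
      unfolding E_def by (simp add: algebra_simps)
    ultimately show "\<exists>D. (w has_real_derivative D) (at r) \<and> D \<le> 0" by blast
  qed
  then have "(norm (y t - z t))\<^sup>2 * exp (- (2 * L) * (t - a)) * exp (2 * L * (t - a))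
      \<le> (norm (y a - z a))\<^sup>2 * exp (2 * L * (t - a))"
    unfolding w_def by (intro mult_right_mono) auto
  then have "(norm (y t - z t))\<^sup>2 \<le> (norm (y a - z a))\<^sup>2 * exp (2 * L * (t - a))"
    by (simp add: mult.assoc exp_add[symmetric])
  also have "\<dots> = (norm (y a - z a) * exp (L * (t - a)))\<^sup>2"
    by (simp add: power_mult_distrib power2_eq_square exp_add[symmetric])
  finally have "(norm (y t - z t))\<^sup>2 \<le> (norm (y a - z a) * exp (L * (t - a)))\<^sup>2" .
  then show ?thesis by (rule power2_le_imp_le) simp
qed

text \<open>Time is clamped to the interval [a, a + delta], so that the Picard operator acts on
  bounded continuous functions on the whole real line.\<close>
definition picard_operator ::
    "('a::euclidean_space \<Rightarrow> 'a) \<Rightarrow> 'a \<Rightarrow> real \<Rightarrow> real \<Rightarrow> (real \<Rightarrow> 'a) \<Rightarrow> real \<Rightarrow> 'a" where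
  "picard_operator f p a \<delta> g t = p + integral {a..max a (min t (a + \<delta>))} (\<lambda>r. f (g r))"

lemma continuous_on_compose_lipschitz:
  assumes "L-lipschitz_on U f" "continuous_on S g" "\<And>r. r \<in> S \<Longrightarrow> g r \<in> U"
  shows "continuous_on S (\<lambda>r. f (g r))"
  by (rule continuous_on_compose2[OF lipschitz_on_continuous_on[OF assms(1)] assms(2)]) (use assms(3) in auto)

lemma picard_operator_maps_ball:
  fixes f :: "'a::euclidean_space \<Rightarrow> 'a"
  assumes lip: "L-lipschitz_on (cball p 1) f"
    and bound: "\<And>q. q \<in> cball p 1 \<Longrightarrow> norm (f q) \<le> B"
    and "\<delta> > 0" "\<delta> * B \<le> 1"
    and g: "continuous_on UNIV g" "\<And>r. g r \<in> cball p 1"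
  shows "continuous_on UNIV (picard_operator f p a \<delta> g)"
    and "picard_operator f p a \<delta> g t \<in> cball p 1"
proof -
  define cl where "cl = (\<lambda>t::real. max a (min t (a + \<delta>)))"
  have cl_in: "cl t \<in> {a..a+\<delta>}" for t unfolding cl_def using \<open>\<delta> > 0\<close> by auto
  have fg: "continuous_on S (\<lambda>r. f (g r))" for S
    by (rule continuous_on_compose_lipschitz[OF lip continuous_on_subset[OF g(1)]]) (use g(2) in auto)
  have "continuous_on {a..a+\<delta>} (\<lambda>x. integral {a..x} (\<lambda>r. f (g r)))"
    by (rule indefinite_integral_continuous_1, rule integrable_continuous_real, rule fg)
  then have "continuous_on UNIV (\<lambda>t. integral {a..cl t} (\<lambda>r. f (g r)))"
    by (rule continuous_on_compose2) (use cl_in in \<open>auto simp: cl_def intro!: continuous_intros\<close>)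
  then show "continuous_on UNIV (picard_operator f p a \<delta> g)"
    unfolding picard_operator_def[abs_def] cl_def by (intro continuous_intros)
  have "norm (integral {a..cl t} (\<lambda>r. f (g r))) \<le> B * (cl t - a)"
    by (rule integral_bound) (use cl_in[of t] fg bound g(2) in auto)
  also have "\<dots> \<le> B * \<delta>"
    using cl_in[of t] order_trans[OF norm_ge_zero bound[of p]] by (intro mult_left_mono) auto
  finally show "picard_operator f p a \<delta> g t \<in> cball p 1"
    using \<open>\<delta> * B \<le> 1\<close> unfolding picard_operator_def cl_def by (simp add: dist_norm mult.commute)
qed

lemma picard_operator_contraction:
  fixes f :: "'a::euclidean_space \<Rightarrow> 'a"
  assumes lip: "L-lipschitz_on (cball p 1) f" and "\<delta> > 0"
    and g: "continuous_on UNIV g" "\<And>r. g r \<in> cball p 1"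
    and h: "continuous_on UNIV h" "\<And>r. h r \<in> cball p 1"
    and dist_gh: "\<And>r. dist (g r) (h r) \<le> D"
  shows "dist (picard_operator f p a \<delta> g t) (picard_operator f p a \<delta> h t) \<le> \<delta> * L * D"
proof -
  define c where "c = max a (min t (a + \<delta>))"
  have c: "a \<le> c" "c - a \<le> \<delta>" unfolding c_def using \<open>\<delta> > 0\<close> by auto
  have fg: "continuous_on {a..c} (\<lambda>r. f (g r))" and fh: "continuous_on {a..c} (\<lambda>r. f (h r))"
    by (rule continuous_on_compose_lipschitz[OF lip continuous_on_subset], use g h in auto)+
  have "dist (picard_operator f p a \<delta> g t) (picard_operator f p a \<delta> h t)
      = norm (integral {a..c} (\<lambda>r. f (g r) - f (h r)))"
    unfolding picard_operator_def c_def[symmetric]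
    by (simp add: dist_norm integral_diff integrable_continuous_real fg fh)
  also have "\<dots> \<le> (L * D) * (c - a)"
  proof (rule integral_bound[OF \<open>a \<le> c\<close>])
    show "continuous_on {a..c} (\<lambda>r. f (g r) - f (h r))" by (intro continuous_intros fg fh)
    fix r
    have "norm (f (g r) - f (h r)) \<le> L * norm (g r - h r)"
      by (rule lipschitz_on_normD[OF lip g(2) h(2)])
    also have "\<dots> \<le> L * D"
      using dist_gh[of r] lipschitz_on_nonneg[OF lip] by (simp add: dist_norm mult_left_mono)
    finally show "norm (f (g r) - f (h r)) \<le> L * D" .
  qed
  also have "\<dots> \<le> (L * D) * \<delta>"
    using c lipschitz_on_nonneg[OF lip] order_trans[OF zero_le_dist dist_gh]
    by (intro mult_left_mono) auto
  finally show ?thesis by (simp add: algebra_simps)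
qed

lemma integral_equation_has_solution:
  fixes f :: "'a::euclidean_space \<Rightarrow> 'a"
  assumes lip: "L-lipschitz_on (cball p 1) f"
    and bound: "\<And>q. q \<in> cball p 1 \<Longrightarrow> norm (f q) \<le> B"
    and "\<delta> > 0" "\<delta> * L < 1" "\<delta> * B \<le> 1"
  obtains y where "continuous_on UNIV y" "\<And>t. y t \<in> cball p 1"
    "\<And>t. t \<in> {a..a+\<delta>} \<Longrightarrow> y t = p + integral {a..t} (\<lambda>r. f (y r))"
proof -
  define S :: "(real \<Rightarrow>\<^sub>C 'a) set" where "S = PiC UNIV (\<lambda>_. cball p 1)"
  define P where "P = (\<lambda>g :: real \<Rightarrow>\<^sub>C 'a. picard_operator f p a \<delta> g)"
  have inS: "g \<in> S \<longleftrightarrow> (\<forall>t. g t \<in> cball p 1)" for g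
    unfolding S_def mem_PiC_iff by auto
  have P_maps: "continuous_on UNIV (P g)" "P g t \<in> cball p 1" if "g \<in> S" for g t
    using picard_operator_maps_ball[OF lip bound \<open>\<delta> > 0\<close> \<open>\<delta> * B \<le> 1\<close>] that inS
    unfolding P_def by auto
  have apply_P: "apply_bcontfun (Bcontfun (P g)) = P g" if "g \<in> S" for g
  proof (rule Bcontfun_inverse, rule bcontfun_normI[OF P_maps(1)[OF that]])
    fix t
    have "norm (P g t - p) \<le> 1" using P_maps(2)[OF that, of t] by (simp add: dist_norm norm_minus_commute)
    then show "norm (P g t) \<le> norm p + 1" using norm_triangle_sub[of "P g t" p] by linarith
  qed
  have "\<exists>!g\<in>S. Bcontfun (P g) = g"
  proof (rule Banach_fix)
    show "complete S" unfolding S_def by (rule complete_eq_closed[THEN iffD2], rule closed_PiC) auto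
    have "const_bcontfun p \<in> S" unfolding inS by (simp add: const_bcontfun.rep_eq)
    then show "S \<noteq> {}" by blast
    show "0 \<le> \<delta> * L" using \<open>\<delta> > 0\<close> lipschitz_on_nonneg[OF lip] by simp
    show "\<delta> * L < 1" by fact
    show "(\<lambda>g. Bcontfun (P g)) ` S \<subseteq> S" using apply_P P_maps(2) inS by auto
    fix g h assume "g \<in> S" "h \<in> S"
    show "dist (Bcontfun (P g)) (Bcontfun (P h)) \<le> \<delta> * L * dist g h"
    proof (rule dist_bound)
      fix t
      have "dist (P g t) (P h t) \<le> \<delta> * L * dist g h"
        unfolding P_def by (rule picard_operator_contraction[OF lip \<open>\<delta> > 0\<close>])
          (use \<open>g \<in> S\<close> \<open>h \<in> S\<close> inS dist_bounded in auto)
      then show "dist (Bcontfun (P g) t) (Bcontfun (P h) t) \<le> \<delta> * L * dist g h"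
        by (simp only: apply_P[OF \<open>g \<in> S\<close>] apply_P[OF \<open>h \<in> S\<close>])
    qed
  qed
  then obtain g where g: "g \<in> S" "Bcontfun (P g) = g" by blast
  have fixed_point: "g t = P g t" for t using apply_P[OF g(1)] by (simp add: g(2))
  show thesis
  proof (rule that[of "apply_bcontfun g"])
    show "continuous_on UNIV g" by simp
    show "g t \<in> cball p 1" for t using g(1) inS by blast
    show "g t = p + integral {a..t} (\<lambda>r. f (g r))" if "t \<in> {a..a+\<delta>}" for t
      using fixed_point[of t] that unfolding P_def picard_operator_def by (simp add: max_def min_def)
  qed
qed

lemma integral_equation_imp_solution:
  fixes y :: "real \<Rightarrow> 'a::banach"
  assumes cont: "continuous_on {a..b} (\<lambda>r. f (y r))"
    and int_eq: "\<And>t. t \<in> {a..b} \<Longrightarrow> y t = p + integral {a..t} (\<lambda>r. f (y r))"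
    and t: "t \<in> {a<..<b}"
  shows "(y has_vector_derivative f (y t)) (at t)"
proof -
  have "((\<lambda>u. integral {a..u} (\<lambda>r. f (y r))) has_vector_derivative f (y t)) (at t within {a..b})"
    by (rule integral_has_vector_derivative[OF cont]) (use t in simp)
  from has_vector_derivative_add[OF has_vector_derivative_const[of p] this]
  have "((\<lambda>u. p + integral {a..u} (\<lambda>r. f (y r))) has_vector_derivative f (y t)) (at t within {a..b})"
    by simp
  then have "(y has_vector_derivative f (y t)) (at t within {a..b})"
    by (rule has_vector_derivative_transform[rotated 2]) (use t in simp, erule int_eq)
  then have "(y has_vector_derivative f (y t)) (at t within {a<..<b})"
    by (rule has_vector_derivative_within_subset) auto
  then show ?thesis using has_vector_derivative_within_open[OF t open_greaterThanLessThan] by blast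
qed

lemma local_solution_exists:
  fixes f :: "'a::euclidean_space \<Rightarrow> 'a"
  assumes lip: "L-lipschitz_on (cball 0 (M + 1)) f" and "M \<ge> 0"
  obtains \<delta> where "\<delta> > 0"
    "\<And>p t0. norm p \<le> M \<Longrightarrow> \<exists>y. y t0 = p \<and> continuous_on {t0..t0+\<delta>} y \<and>
        (\<forall>t\<in>{t0..t0+\<delta>}. norm (y t) \<le> M + 1) \<and>
        (\<forall>t\<in>{t0<..<t0+\<delta>}. (y has_vector_derivative f (y t)) (at t))"
proof -
  define B where "B = norm (f 0) + L * (M + 1)"
  define \<delta> where "\<delta> = 1 / (2 * (L + B + 1))"
  have L0: "L \<ge> 0" using lipschitz_on_nonneg[OF lip] .
  have bound: "norm (f q) \<le> B" if "q \<in> cball 0 (M + 1)" for q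
  proof -
    have "norm (f q - f 0) \<le> L * norm (q - 0)"
      by (rule lipschitz_on_normD[OF lip that]) (use \<open>M \<ge> 0\<close> in simp)
    also have "\<dots> \<le> L * (M + 1)" using that L0 by (simp add: mult_left_mono)
    finally show ?thesis unfolding B_def using norm_triangle_sub[of "f q" "f 0"] by linarith
  qed
  have "B \<ge> 0" unfolding B_def using L0 \<open>M \<ge> 0\<close> by simp
  then have "\<delta> > 0" "\<delta> * L < 1" "\<delta> * B \<le> 1"
    unfolding \<delta>_def using L0 by (simp_all add: field_simps)
  show thesis
  proof (rule that[OF \<open>\<delta> > 0\<close>])
    fix p :: 'a and t0 :: real
    assume "norm p \<le> M"
    then have ball: "cball p 1 \<subseteq> cball 0 (M + 1)" by (simp add: cball_subset_cball_iff dist_norm)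
    obtain y where cont: "continuous_on UNIV y" and in_ball: "\<And>t. y t \<in> cball p 1"
      and int_eq: "\<And>t. t \<in> {t0..t0+\<delta>} \<Longrightarrow> y t = p + integral {t0..t} (\<lambda>r. f (y r))"
      using integral_equation_has_solution[where a=t0, OF lipschitz_on_subset[OF lip ball] _
          \<open>\<delta> > 0\<close> \<open>\<delta> * L < 1\<close> \<open>\<delta> * B \<le> 1\<close>] bound ball
      by blast
    have y_ball: "y t \<in> cball 0 (M + 1)" for t using subsetD[OF ball in_ball[of t]] .
    have "continuous_on {t0..t0+\<delta>} (\<lambda>r. f (y r))"
      by (rule continuous_on_compose_lipschitz[OF lip continuous_on_subset[OF cont] y_ball]) auto
    then show "\<exists>y. y t0 = p \<and> continuous_on {t0..t0+\<delta>} y \<and>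
        (\<forall>t\<in>{t0..t0+\<delta>}. norm (y t) \<le> M + 1) \<and>
        (\<forall>t\<in>{t0<..<t0+\<delta>}. (y has_vector_derivative f (y t)) (at t))"
      using int_eq[of t0] \<open>\<delta> > 0\<close> continuous_on_subset[OF cont] y_ball
      by (intro exI[of _ y] conjI ballI integral_equation_imp_solution[OF _ int_eq]) auto
  qed
qed

lemma has_vector_derivative_shift_arg:
  assumes "(y has_vector_derivative v) (at (c + r))"
  shows "((\<lambda>r. y (c + r)) has_vector_derivative v) (at r)"
proof -
  have "((\<lambda>r. c + r) has_vector_derivative 1) (at r)"
    by (auto intro!: derivative_eq_intros)
  from vector_diff_chain_at[OF this, of y v] assms show ?thesis by (simp add: o_def)
qed

lemma solution_continuous_on:
  assumes "\<And>t. t \<in> S \<Longrightarrow> (y has_vector_derivative f (y t)) (at t)"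
  shows "continuous_on S y"
  using assms has_vector_derivative_continuous continuous_at_imp_continuous_on by blast

lemma bounded_solution_extends:
  fixes f :: "'a::euclidean_space \<Rightarrow> 'a" and y :: "real \<Rightarrow> 'a"
  assumes lip: "L-lipschitz_on (cball 0 (R + 1)) f"
    and sol: "\<And>t. t < b \<Longrightarrow> (y has_vector_derivative f (y t)) (at t)"
    and "s < b" and bounded: "\<And>t. s \<le> t \<Longrightarrow> t < b \<Longrightarrow> norm (y t) \<le> R"
  obtains c \<psi> where "c > b" "\<And>t. t < c \<Longrightarrow> (\<psi> has_vector_derivative f (\<psi> t)) (at t)"
    "\<And>t. t < b \<Longrightarrow> \<psi> t = y t"
proof -
  have "R \<ge> 0" using bounded[of s] \<open>s < b\<close> norm_ge_zero[of "y s"] by linarith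
  obtain \<delta> where "\<delta> > 0" and local_sol: "\<And>p t0. norm p \<le> R \<Longrightarrow> \<exists>z. z t0 = p \<and>
        continuous_on {t0..t0+\<delta>} z \<and> (\<forall>t\<in>{t0..t0+\<delta>}. norm (z t) \<le> R + 1) \<and>
        (\<forall>t\<in>{t0<..<t0+\<delta>}. (z has_vector_derivative f (z t)) (at t))"
    using local_solution_exists[OF lip \<open>R \<ge> 0\<close>] by blast
  define t1 where "t1 = max s (b - \<delta> / 2)"
  have t1: "s \<le> t1" "t1 < b" "b < t1 + \<delta>" unfolding t1_def using \<open>s < b\<close> \<open>\<delta> > 0\<close> by auto
  obtain z where z: "z t1 = y t1" "continuous_on {t1..t1+\<delta>} z"
    "\<And>t. t \<in> {t1..t1+\<delta>} \<Longrightarrow> norm (z t) \<le> R + 1"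
    "\<And>t. t \<in> {t1<..<t1+\<delta>} \<Longrightarrow> (z has_vector_derivative f (z t)) (at t)"
    using local_sol[of "y t1" t1] bounded[OF t1(1,2)] by blast
  have agree: "y t = z t" if "t1 \<le> t" "t < b" for t
  proof -
    have "norm (y t - z t) \<le> norm (y t1 - z t1) * exp (L * (t - t1))"
    proof (rule solutions_dist_le[OF lip that(1)])
      show "continuous_on {t1..t} y" by (rule solution_continuous_on[of _ y f]) (use sol that in auto)
      show "continuous_on {t1..t} z" by (rule continuous_on_subset[OF z(2)]) (use that t1 in auto)
      show "(y has_vector_derivative f (y r)) (at r)" if "r \<in> {t1<..<t}" for r
        using sol that \<open>t < b\<close> by auto
      show "(z has_vector_derivative f (z r)) (at r)" if "r \<in> {t1<..<t}" for r
        using z(4) that \<open>t < b\<close> t1 by auto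
      show "norm (y r) \<le> R + 1" if "r \<in> {t1..t}" for r
        using bounded[of r] that \<open>t < b\<close> t1 by auto
      show "norm (z r) \<le> R + 1" if "r \<in> {t1..t}" for r
        using z(3) that \<open>t < b\<close> t1 by auto
    qed
    then show ?thesis using z(1) by simp
  qed
  define \<psi> where "\<psi> = (\<lambda>t. if t < b then y t else z t)"
  show thesis
  proof (rule that[of "t1 + \<delta>" \<psi>])
    show "b < t1 + \<delta>" by fact
    show "\<psi> t = y t" if "t < b" for t using that by (simp add: \<psi>_def)
    show "(\<psi> has_vector_derivative f (\<psi> t)) (at t)" if "t < t1 + \<delta>" for t
    proof (cases "t < b")
      case True
      have "(\<psi> has_vector_derivative f (y t)) (at t)"
        by (rule has_vector_derivative_transform_within_open[OF sol[OF True] open_lessThan[of b]])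
          (use True in \<open>auto simp: \<psi>_def\<close>)
      then show ?thesis using True by (simp add: \<psi>_def)
    next
      case False
      then have t: "t \<in> {t1<..<t1+\<delta>}" using t1 that by auto
      have "(\<psi> has_vector_derivative f (z t)) (at t)"
        by (rule has_vector_derivative_transform_within_open[OF z(4)[OF t] open_greaterThanLessThan t])
          (use agree in \<open>auto simp: \<psi>_def\<close>)
      then show ?thesis using False by (simp add: \<psi>_def)
    qed
  qed
qed

lemma solution_tends_to_infinity_at_finite_end:
  fixes f :: "'a::euclidean_space \<Rightarrow> 'a" and y :: "real \<Rightarrow> 'a"
  assumes lip: "\<And>R. \<exists>L. L-lipschitz_on (cball 0 R) f"
    and growth: "\<And>p. inner p (f p) \<le> K * (1 + (norm p)\<^sup>2)\<^sup>2" and "K > 0"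
    and sol: "\<And>t. t < b \<Longrightarrow> (y has_vector_derivative f (y t)) (at t)"
    and maximal: "\<And>c z. c > b \<Longrightarrow> (\<And>t. t < c \<Longrightarrow> (z has_vector_derivative f (z t)) (at t))
                    \<Longrightarrow> \<exists>t<b. z t \<noteq> y t"
  shows "filterlim (\<lambda>t. norm (y t)) at_top (at_left b)"
proof (rule ccontr)
  assume "\<not> filterlim (\<lambda>t. norm (y t)) at_top (at_left b)"
  then obtain Z where "\<not> eventually (\<lambda>t. Z \<le> norm (y t)) (at_left b)"
    unfolding filterlim_at_top by blast
  then have frequently_small: "\<forall>a<b. \<exists>s>a. s < b \<and> norm (y s) < Z"
    unfolding eventually_at_left_field by (auto simp: not_le)
  define M where "M = max Z 0"
  have "1 / (4 * K * (1 + M\<^sup>2)) > 0" using \<open>K > 0\<close> by (simp add: add_pos_nonneg)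
  then obtain s where s: "b - 1 / (4 * K * (1 + M\<^sup>2)) < s" "s < b" "norm (y s) \<le> M"
    using frequently_small[rule_format, of "b - 1 / (4 * K * (1 + M\<^sup>2))"] unfolding M_def
    by force
  have bounded: "norm (y t) \<le> 2 * M + 2" if "s \<le> t" "t < b" for t
    by (rule solution_norm_bound[where f=f and y=y, OF growth \<open>K > 0\<close> _ that(1) s(3)]) (use sol that s in auto)
  obtain L where lipM: "L-lipschitz_on (cball 0 (2 * M + 2 + 1)) f" using lip by blast
  obtain c \<psi> where "c > b" "\<And>t. t < c \<Longrightarrow> (\<psi> has_vector_derivative f (\<psi> t)) (at t)"
    "\<And>t. t < b \<Longrightarrow> \<psi> t = y t"
    using bounded_solution_extends[OF lipM sol \<open>s < b\<close> bounded] by blast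
  then show False using maximal by blast
qed

lemma shifted_solutions_tendsto:
  fixes f :: "'a::real_inner \<Rightarrow> 'a" and y z :: "real \<Rightarrow> 'a"
  assumes lip: "L-lipschitz_on (cball 0 R) f"
    and sol: "\<And>t. (y has_vector_derivative f (y t)) (at t)"
    and lim: "(\<lambda>n. y (tn n)) \<longlonglongrightarrow> q"
    and bounded: "eventually (\<lambda>n. \<forall>r\<in>{0..s}. norm (y (tn n + r)) \<le> R) sequentially"
    and "0 \<le> s" and z: "z 0 = q" "continuous_on {0..s} z"
    "\<And>r. r \<in> {0<..<s} \<Longrightarrow> (z has_vector_derivative f (z r)) (at r)"
    "\<And>r. r \<in> {0..s} \<Longrightarrow> norm (z r) \<le> R"
  shows "(\<lambda>n. y (tn n + s)) \<longlonglongrightarrow> z s"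
proof -
  have shifted_sol: "((\<lambda>r. y (tn n + r)) has_vector_derivative f (y (tn n + r))) (at r)" for n r
    by (rule has_vector_derivative_shift_arg[OF sol])
  have "(\<lambda>n. y (tn n) - q) \<longlonglongrightarrow> 0" using lim by (simp add: LIM_zero_iff)
  then have dist_lim: "(\<lambda>n. norm (y (tn n) - q) * exp (L * s)) \<longlonglongrightarrow> 0"
    by (rule tendsto_mult_left_zero[OF tendsto_norm_zero])
  have "eventually (\<lambda>n. norm (y (tn n + s) - z s) \<le> norm (y (tn n) - q) * exp (L * s)) sequentially"
    using bounded
  proof eventually_elim
    case (elim n)
    have "norm (y (tn n + s) - z s) \<le> norm (y (tn n + 0) - z 0) * exp (L * (s - 0))"
    proof (rule solutions_dist_le[where y="\<lambda>r. y (tn n + r)" and z=z and a=0 and t=s, OF lip \<open>0 \<le> s\<close>])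
      show "continuous_on {0..s} (\<lambda>r. y (tn n + r))" by (rule solution_continuous_on[OF shifted_sol])
      show "((\<lambda>r. y (tn n + r)) has_vector_derivative f (y (tn n + r))) (at r)" for r
        by (rule shifted_sol)
      show "norm (y (tn n + r)) \<le> R" if "r \<in> {0..s}" for r using elim that by blast
    qed (use z in auto)
    then show ?case using z(1) by simp
  qed
  then have "(\<lambda>n. y (tn n + s) - z s) \<longlonglongrightarrow> 0" by (rule Lim_null_comparison[OF _ dist_lim])
  then show ?thesis by (simp add: LIM_zero_iff)
qed

lemma level_constant_through_limit_point:
  fixes f :: "'a::euclidean_space \<Rightarrow> 'a" and y :: "real \<Rightarrow> 'a" and V :: "'a \<Rightarrow> real"
  assumes lip: "\<And>R. \<exists>L. L-lipschitz_on (cball 0 R) f"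
    and growth: "\<And>p. inner p (f p) \<le> K * (1 + (norm p)\<^sup>2)\<^sup>2" and "K > 0"
    and sol: "\<And>t. (y has_vector_derivative f (y t)) (at t)"
    and V_cont: "\<And>p. isCont V p" and V_mono: "\<And>s t. s \<le> t \<Longrightarrow> V (y s) \<le> V (y t)"
    and tn: "filterlim tn at_top sequentially" and lim: "(\<lambda>n. y (tn n)) \<longlonglongrightarrow> q"
  obtains \<delta> z where "\<delta> > 0" "z 0 = q"
    "\<And>t. t \<in> {0<..<\<delta>} \<Longrightarrow> (z has_vector_derivative f (z t)) (at t)"
    "\<And>t. t \<in> {0..\<delta>} \<Longrightarrow> V (z t) = V q"
proof -
  have V_lim: "(\<lambda>n. V (y (tn n))) \<longlonglongrightarrow> V q" by (rule isCont_tendsto_compose[OF V_cont lim])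
  have V_le: "V (y t) \<le> V q" for t
  proof (rule tendsto_lowerbound[OF V_lim])
    have "eventually (\<lambda>n. t \<le> tn n) sequentially" using tn by (simp add: filterlim_at_top)
    then show "eventually (\<lambda>n. V (y t) \<le> V (y (tn n))) sequentially"
      by eventually_elim (rule V_mono)
  qed simp
  define M where "M = norm q + 1"
  define \<tau> where "\<tau> = 1 / (4 * K * (1 + M\<^sup>2))"
  define R where "R = 2 * M + 2"
  have "M \<ge> 0" "\<tau> > 0" unfolding M_def \<tau>_def using \<open>K > 0\<close> by (auto simp: add_pos_nonneg)
  have "eventually (\<lambda>n. norm (y (tn n)) < M) sequentially"
    unfolding M_def by (rule order_tendstoD[OF tendsto_norm[OF lim]]) simp
  then have bounded: "eventually (\<lambda>n. \<forall>r\<in>{0..\<tau>}. norm (y (tn n + r)) \<le> R) sequentially"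
  proof eventually_elim
    case (elim n)
    show ?case
    proof
      fix r assume "r \<in> {0..\<tau>}"
      then show "norm (y (tn n + r)) \<le> R"
        unfolding R_def
        by (intro solution_norm_bound[where f=f and y=y and s="tn n", OF growth \<open>K > 0\<close> sol])
          (use elim in \<open>auto simp: \<tau>_def\<close>)
    qed
  qed
  obtain L where lipR: "L-lipschitz_on (cball 0 R) f" using lip by blast
  have "L-lipschitz_on (cball 0 (M + 1)) f"
    by (rule lipschitz_on_subset[OF lipR]) (use \<open>M \<ge> 0\<close> in \<open>auto simp: R_def\<close>)
  then obtain \<delta>0 where "\<delta>0 > 0" and local_sol: "\<And>p t0. norm p \<le> M \<Longrightarrow> \<exists>z. z t0 = p \<and>
        continuous_on {t0..t0+\<delta>0} z \<and> (\<forall>t\<in>{t0..t0+\<delta>0}. norm (z t) \<le> M + 1) \<and>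
        (\<forall>t\<in>{t0<..<t0+\<delta>0}. (z has_vector_derivative f (z t)) (at t))"
    using local_solution_exists[OF _ \<open>M \<ge> 0\<close>] by blast
  have "norm q \<le> M" unfolding M_def by simp
  from local_sol[OF this, of 0] obtain z where z: "z 0 = q" "continuous_on {0..\<delta>0} z"
    "\<And>t. t \<in> {0..\<delta>0} \<Longrightarrow> norm (z t) \<le> M + 1"
    "\<And>t. t \<in> {0<..<\<delta>0} \<Longrightarrow> (z has_vector_derivative f (z t)) (at t)"
    unfolding add_0_left by blast
  define \<delta> where "\<delta> = min \<delta>0 \<tau>"
  have "\<delta> > 0" unfolding \<delta>_def using \<open>\<delta>0 > 0\<close> \<open>\<tau> > 0\<close> by simp
  have "V (z s) = V q" if s: "s \<in> {0..\<delta>}" for s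
  proof -
    have "(\<lambda>n. y (tn n + s)) \<longlonglongrightarrow> z s"
    proof (rule shifted_solutions_tendsto[OF lipR sol lim])
      show "eventually (\<lambda>n. \<forall>r\<in>{0..s}. norm (y (tn n + r)) \<le> R) sequentially"
        using bounded by eventually_elim (use s in \<open>auto simp: \<delta>_def\<close>)
      show "continuous_on {0..s} z" by (rule continuous_on_subset[OF z(2)]) (use s in \<open>auto simp: \<delta>_def\<close>)
      show "norm (z r) \<le> R" if "r \<in> {0..s}" for r
        using z(3)[of r] that s \<open>M \<ge> 0\<close> by (auto simp: \<delta>_def R_def)
    qed (use s z in \<open>auto simp: \<delta>_def\<close>)
    then have "(\<lambda>n. V (y (tn n + s))) \<longlonglongrightarrow> V (z s)" by (rule isCont_tendsto_compose[OF V_cont])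
    moreover have "(\<lambda>n. V (y (tn n + s))) \<longlonglongrightarrow> V q"
    proof (rule tendsto_sandwich[OF _ _ V_lim tendsto_const])
      show "eventually (\<lambda>n. V (y (tn n)) \<le> V (y (tn n + s))) sequentially" using V_mono s by simp
      show "eventually (\<lambda>n. V (y (tn n + s)) \<le> V q) sequentially" using V_le by simp
    qed
    ultimately show ?thesis by (rule LIMSEQ_unique)
  qed
  moreover have "(z has_vector_derivative f (z t)) (at t)" if "t \<in> {0<..<\<delta>}" for t
    using z(4) that by (auto simp: \<delta>_def)
  ultimately show thesis using that \<open>\<delta> > 0\<close> z(1) by blast
qed

section \<open>The vector field\<close>

lemma abs_components_le_norm:
  fixes p :: "real \<times> real \<times> real"
  shows "\<bar>fst p\<bar> \<le> norm p" "\<bar>fst (snd p)\<bar> \<le> norm p" "\<bar>snd (snd p)\<bar> \<le> norm p"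
proof -
  obtain a b c where p: "p = (a, b, c)" by (cases p) auto
  show "\<bar>fst p\<bar> \<le> norm p" using norm_fst_le[of a "(b, c)"] p by simp
  show "\<bar>fst (snd p)\<bar> \<le> norm p" using norm_fst_le[of b c] norm_snd_le[of "(b, c)" a] p by simp
  show "\<bar>snd (snd p)\<bar> \<le> norm p" using norm_snd_le[of c b] norm_snd_le[of "(b, c)" a] p by simp
qed

lemma norm_triple_le: "norm ((a::real), (b::real), (c::real)) \<le> \<bar>a\<bar> + \<bar>b\<bar> + \<bar>c\<bar>"
  using norm_Pair_le[of a "(b, c)"] norm_Pair_le[of b c] by simp

lemma abs_mult_diff_le:
  fixes a b c d :: real
  assumes "\<bar>a\<bar> \<le> R" "\<bar>d\<bar> \<le> R" "\<bar>b - d\<bar> \<le> e" "\<bar>a - c\<bar> \<le> e"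
  shows "\<bar>a * b - c * d\<bar> \<le> 2 * R * e"
proof -
  have "a * b - c * d = a * (b - d) + d * (a - c)" by (simp add: algebra_simps)
  also have "\<bar>\<dots>\<bar> \<le> \<bar>a\<bar> * \<bar>b - d\<bar> + \<bar>d\<bar> * \<bar>a - c\<bar>" by (metis abs_mult abs_triangle_ineq)
  also have "\<dots> \<le> R * e + R * e" by (intro add_mono mult_mono) (use assms in auto)
  finally show ?thesis by simp
qed

lemma abs_cube_diff_le:
  fixes a c :: real
  assumes "\<bar>a\<bar> \<le> R" "\<bar>c\<bar> \<le> R" "\<bar>a - c\<bar> \<le> e"
  shows "\<bar>a ^ 3 - c ^ 3\<bar> \<le> 3 * R\<^sup>2 * e"
proof -
  have "\<bar>a * a + a * c + c * c\<bar> \<le> \<bar>a\<bar> * \<bar>a\<bar> + \<bar>a\<bar> * \<bar>c\<bar> + \<bar>c\<bar> * \<bar>c\<bar>"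
    by (simp add: abs_mult[symmetric] order_trans[OF abs_triangle_ineq])
  also have "\<dots> \<le> R * R + R * R + R * R" by (intro add_mono mult_mono) (use assms in auto)
  finally have sum: "\<bar>a * a + a * c + c * c\<bar> \<le> 3 * R\<^sup>2" by (simp add: power2_eq_square)
  have "\<bar>a ^ 3 - c ^ 3\<bar> = \<bar>a - c\<bar> * \<bar>a * a + a * c + c * c\<bar>"
    by (simp add: abs_mult[symmetric] algebra_simps power3_eq_cube)
  also have "\<dots> \<le> e * (3 * R\<^sup>2)" by (intro mult_mono sum) (use assms in auto)
  finally show ?thesis by (simp add: mult.commute)
qed

lemma rhs_lipschitz_on_cball:
  assumes "R \<ge> 0"
  shows "(2 + \<bar>lam\<bar> + \<bar>\<alpha>\<bar> + (2 + 2 * \<bar>\<beta>\<bar>) * R + 3 * R\<^sup>2)-lipschitz_on (cball 0 R) (rhs \<alpha> lam \<beta>)"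
proof (rule lipschitz_onI)
  show "0 \<le> 2 + \<bar>lam\<bar> + \<bar>\<alpha>\<bar> + (2 + 2 * \<bar>\<beta>\<bar>) * R + 3 * R\<^sup>2" using assms by simp
  fix p q :: "real \<times> real \<times> real"
  assume "p \<in> cball 0 R" "q \<in> cball 0 R"
  then have "norm p \<le> R" "norm q \<le> R" by auto
  obtain x1 t1 u1 where p: "p = (x1, t1, u1)" by (cases p) auto
  obtain x2 t2 u2 where q: "q = (x2, t2, u2)" by (cases q) auto
  define d where "d = dist p q"
  have dx: "\<bar>x1 - x2\<bar> \<le> d" "\<bar>t1 - t2\<bar> \<le> d" "\<bar>u1 - u2\<bar> \<le> d"
    using abs_components_le_norm[of "p - q"] unfolding d_def dist_norm p q by auto
  have bx: "\<bar>x1\<bar> \<le> R" "\<bar>t1\<bar> \<le> R" "\<bar>u1\<bar> \<le> R" "\<bar>x2\<bar> \<le> R" "\<bar>t2\<bar> \<le> R" "\<bar>u2\<bar> \<le> R"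
    using abs_components_le_norm[of p] abs_components_le_norm[of q] \<open>norm p \<le> R\<close> \<open>norm q \<le> R\<close>
    unfolding p q by auto
  have xu: "\<bar>x1 * u1 - x2 * u2\<bar> \<le> 2 * R * d" by (rule abs_mult_diff_le) (use bx dx in auto)
  have xt: "\<bar>x1 * t1 - x2 * t2\<bar> \<le> 2 * R * d" by (rule abs_mult_diff_le) (use bx dx in auto)
  have x3: "\<bar>x1 ^ 3 - x2 ^ 3\<bar> \<le> 3 * R\<^sup>2 * d" by (rule abs_cube_diff_le) (use bx dx in auto)
  have "rhs \<alpha> lam \<beta> p - rhs \<alpha> lam \<beta> q = (t1 - t2,
      - lam * (t1 - t2) - (x1 * u1 - x2 * u2) + (x1 - x2) - (x1 ^ 3 - x2 ^ 3),
      - \<alpha> * (u1 - u2) - \<beta> * (x1 * t1 - x2 * t2))"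
    unfolding p q rhs_def by (simp add: algebra_simps)
  then have "dist (rhs \<alpha> lam \<beta> p) (rhs \<alpha> lam \<beta> q) \<le> \<bar>t1 - t2\<bar>
      + \<bar>- lam * (t1 - t2) - (x1 * u1 - x2 * u2) + (x1 - x2) - (x1 ^ 3 - x2 ^ 3)\<bar>
      + \<bar>- \<alpha> * (u1 - u2) - \<beta> * (x1 * t1 - x2 * t2)\<bar>"
    using norm_triple_le by (metis dist_norm)
  also have "\<dots> \<le> d + (\<bar>lam\<bar> * d + 2 * R * d + d + 3 * R\<^sup>2 * d) + (\<bar>\<alpha>\<bar> * d + \<bar>\<beta>\<bar> * (2 * R * d))"
  proof (intro add_mono)
    show "\<bar>t1 - t2\<bar> \<le> d" by fact
    have "\<bar>lam * (t1 - t2)\<bar> \<le> \<bar>lam\<bar> * d" using dx(2) by (simp add: abs_mult mult_left_mono)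
    then show "\<bar>- lam * (t1 - t2) - (x1 * u1 - x2 * u2) + (x1 - x2) - (x1 ^ 3 - x2 ^ 3)\<bar>
        \<le> \<bar>lam\<bar> * d + 2 * R * d + d + 3 * R\<^sup>2 * d"
      using xu x3 dx(1) by linarith
    have "\<bar>\<alpha> * (u1 - u2)\<bar> \<le> \<bar>\<alpha>\<bar> * d" using dx(3) by (simp add: abs_mult mult_left_mono)
    moreover have "\<bar>\<beta> * (x1 * t1 - x2 * t2)\<bar> \<le> \<bar>\<beta>\<bar> * (2 * R * d)"
      using xt by (simp add: abs_mult mult_left_mono)
    ultimately show "\<bar>- \<alpha> * (u1 - u2) - \<beta> * (x1 * t1 - x2 * t2)\<bar> \<le> \<bar>\<alpha>\<bar> * d + \<bar>\<beta>\<bar> * (2 * R * d)"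
      by linarith
  qed
  also have "\<dots> = (2 + \<bar>lam\<bar> + \<bar>\<alpha>\<bar> + (2 + 2 * \<bar>\<beta>\<bar>) * R + 3 * R\<^sup>2) * dist p q"
    unfolding d_def by (simp add: algebra_simps)
  finally show "dist (rhs \<alpha> lam \<beta> p) (rhs \<alpha> lam \<beta> q)
      \<le> (2 + \<bar>lam\<bar> + \<bar>\<alpha>\<bar> + (2 + 2 * \<bar>\<beta>\<bar>) * R + 3 * R\<^sup>2) * dist p q" .
qed

lemma rhs_locally_lipschitz: "\<exists>L. L-lipschitz_on (cball 0 R) (rhs \<alpha> lam \<beta>)"
proof -
  have "cball 0 R \<subseteq> cball (0 :: real \<times> real \<times> real) (max R 0)" by (rule subset_cball) simp
  then show ?thesis
    using lipschitz_on_subset[OF rhs_lipschitz_on_cball[where R="max R 0" and lam=lam and \<alpha>=\<alpha> and \<beta>=\<beta>]]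
    by auto
qed

lemma rhs_growth:
  "inner p (rhs \<alpha> lam \<beta> p) \<le> (7 + \<bar>lam\<bar> + \<bar>\<alpha>\<bar> + 2 * \<bar>\<beta>\<bar>) * (1 + (norm p)\<^sup>2)\<^sup>2"
proof -
  define r where "r = norm p"
  define C where "C = 2 + \<bar>lam\<bar> + \<bar>\<alpha>\<bar> + (2 + 2 * \<bar>\<beta>\<bar>) * r + 3 * r\<^sup>2"
  have "r \<ge> 0" unfolding r_def by simp
  have "rhs \<alpha> lam \<beta> 0 = 0" by (simp add: rhs_def zero_prod_def)
  then have "norm (rhs \<alpha> lam \<beta> p) \<le> C * r"
    using lipschitz_on_normD[OF rhs_lipschitz_on_cball[where lam=lam and \<alpha>=\<alpha> and \<beta>=\<beta>, OF \<open>r \<ge> 0\<close>], of p 0]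
    unfolding C_def r_def by simp
  have "inner p (rhs \<alpha> lam \<beta> p) \<le> r * (C * r)"
    using norm_cauchy_schwarz[of p "rhs \<alpha> lam \<beta> p"] \<open>norm (rhs \<alpha> lam \<beta> p) \<le> C * r\<close> \<open>r \<ge> 0\<close>
    unfolding r_def by (meson mult_left_mono norm_ge_zero order_trans)
  also have "\<dots> = (2 + \<bar>lam\<bar> + \<bar>\<alpha>\<bar>) * r\<^sup>2 + (2 + 2 * \<bar>\<beta>\<bar>) * r ^ 3 + 3 * r ^ 4"
    unfolding C_def by (simp add: power2_eq_square power3_eq_cube power4_eq_xxxx algebra_simps)
  also have "\<dots> \<le> (2 + \<bar>lam\<bar> + \<bar>\<alpha>\<bar>) * (1 + r\<^sup>2)\<^sup>2 + (2 + 2 * \<bar>\<beta>\<bar>) * (1 + r\<^sup>2)\<^sup>2 + 3 * (1 + r\<^sup>2)\<^sup>2"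
  proof (intro add_mono mult_left_mono)
    have "(1 + r\<^sup>2)\<^sup>2 = 1 + 2 * r\<^sup>2 + r ^ 4" by (simp add: power2_eq_square power4_eq_xxxx algebra_simps)
    moreover have "r ^ 3 \<le> 1 + r ^ 4"
    proof (cases "r \<le> 1")
      case True
      then show ?thesis using \<open>r \<ge> 0\<close> power_le_one[of r 3] zero_le_power[of r 4] by linarith
    next
      case False
      then have "r ^ 3 \<le> r ^ 4" by (intro power_increasing) auto
      then show ?thesis by simp
    qed
    moreover have "0 \<le> r\<^sup>2" "0 \<le> r ^ 4" by simp_all
    ultimately show "r\<^sup>2 \<le> (1 + r\<^sup>2)\<^sup>2" "r ^ 3 \<le> (1 + r\<^sup>2)\<^sup>2" "r ^ 4 \<le> (1 + r\<^sup>2)\<^sup>2"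
      by linarith+
  qed simp_all
  finally show ?thesis unfolding r_def by (simp add: algebra_simps)
qed

section \<open>Energy and rest points\<close>

lemma rhs_eq:
  "rhs \<alpha> lam \<beta> p = (fst (snd p), - lam * fst (snd p) - fst p * snd (snd p) + fst p - fst p ^ 3,
     - \<alpha> * snd (snd p) - \<beta> * fst p * fst (snd p))"
  by (cases p) (simp add: rhs_def)

lemma rhs_solution_component_derivatives:
  assumes "(\<phi> has_vector_derivative rhs \<alpha> lam \<beta> (\<phi> t)) F"
  shows "((\<lambda>t. fst (\<phi> t)) has_real_derivative fst (snd (\<phi> t))) F"
    and "((\<lambda>t. fst (snd (\<phi> t))) has_real_derivative
      - lam * fst (snd (\<phi> t)) - fst (\<phi> t) * snd (snd (\<phi> t)) + fst (\<phi> t) - fst (\<phi> t) ^ 3) F"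
    and "((\<lambda>t. snd (snd (\<phi> t))) has_real_derivative
      - \<alpha> * snd (snd (\<phi> t)) - \<beta> * fst (\<phi> t) * fst (snd (\<phi> t))) F"
  using has_vector_derivative_fst[OF assms] has_vector_derivative_fst[OF has_vector_derivative_snd[OF assms]]
    has_vector_derivative_snd[OF has_vector_derivative_snd[OF assms]]
  unfolding has_real_derivative_iff_has_vector_derivative rhs_eq[of _ _ _ "\<phi> t"] by simp_all

text \<open>The energy of the Duffing oscillator in (x, theta), corrected by a u-term chosen so that
  the coupling terms cancel in its time derivative.\<close>
definition energy :: "real \<Rightarrow> real \<times> real \<times> real \<Rightarrow> real" where
  "energy \<beta> p = (fst (snd p))\<^sup>2 / 2 - (fst p)\<^sup>2 / 2 + (fst p) ^ 4 / 4 - (snd (snd p))\<^sup>2 / (2 * \<beta>)"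

lemma energy_at_rest_points [simp]:
  "energy \<beta> 0 = 0" "energy \<beta> (1, 0, 0) = - 1 / 4" "energy \<beta> (- 1, 0, 0) = - 1 / 4"
  by (simp_all add: energy_def zero_prod_def)

lemma isCont_energy: "\<beta> \<noteq> 0 \<Longrightarrow> isCont (energy \<beta>) p"
  unfolding energy_def by (intro continuous_intros) auto

lemma energy_has_real_derivative:
  assumes "(\<phi> has_vector_derivative rhs \<alpha> lam \<beta> (\<phi> t)) (at t)" and "\<beta> \<noteq> 0"
  shows "((\<lambda>t. energy \<beta> (\<phi> t)) has_real_derivative
      \<alpha> / \<beta> * (snd (snd (\<phi> t)))\<^sup>2 - lam * (fst (snd (\<phi> t)))\<^sup>2) (at t)"
proof -
  define x where "x = (\<lambda>t. fst (\<phi> t))"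
  define th where "th = (\<lambda>t. fst (snd (\<phi> t)))"
  define u where "u = (\<lambda>t. snd (snd (\<phi> t)))"
  note d = rhs_solution_component_derivatives[OF assms(1)]
  have dx: "(x has_real_derivative th t) (at t)" using d(1) unfolding x_def th_def .
  have dth: "(th has_real_derivative - lam * th t - x t * u t + x t - x t ^ 3) (at t)"
    using d(2) unfolding x_def th_def u_def .
  have du: "(u has_real_derivative - \<alpha> * u t - \<beta> * x t * th t) (at t)"
    using d(3) unfolding x_def th_def u_def .
  have e: "(\<lambda>s. energy \<beta> (\<phi> s)) = (\<lambda>s. th s * th s * (1/2) - x s * x s * (1/2)
      + (x s * x s) * (x s * x s) * (1/4) - u s * u s * (1 / (2 * \<beta>)))"
    unfolding energy_def x_def th_def u_def by (simp add: power2_eq_square power4_eq_xxxx mult.assoc)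
  have "((\<lambda>s. th s * th s * (1/2) - x s * x s * (1/2) + (x s * x s) * (x s * x s) * (1/4)
      - u s * u s * (1 / (2 * \<beta>))) has_real_derivative
      (th t * (- lam * th t - x t * u t + x t - x t ^ 3) + (- lam * th t - x t * u t + x t - x t ^ 3) * th t) * (1/2)
      - (x t * th t + th t * x t) * (1/2)
      + ((x t * x t) * (x t * th t + th t * x t) + (x t * th t + th t * x t) * (x t * x t)) * (1/4)
      - (u t * (- \<alpha> * u t - \<beta> * x t * th t) + (- \<alpha> * u t - \<beta> * x t * th t) * u t) * (1 / (2 * \<beta>)))
      (at t)"
    by (intro DERIV_diff DERIV_add DERIV_cmult_right DERIV_mult' dx dth du)
  then show ?thesis
    unfolding e by (rule DERIV_cong)
      (use \<open>\<beta> \<noteq> 0\<close> in \<open>simp add: x_def th_def u_def field_simps power2_eq_square power3_eq_cube\<close>)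
qed

lemma rest_point_if_u_vanishes:
  fixes \<phi> :: "real \<Rightarrow> real \<times> real \<times> real"
  assumes "open U" "s \<in> U" "\<beta> \<noteq> 0"
    and sol: "\<And>t. t \<in> U \<Longrightarrow> (\<phi> has_vector_derivative rhs \<alpha> lam \<beta> (\<phi> t)) (at t)"
    and u0: "\<And>t. t \<in> U \<Longrightarrow> snd (snd (\<phi> t)) = 0"
  shows "\<phi> s \<in> {0, (1, 0, 0), (-1, 0, 0)}"
proof -
  define x where "x = (\<lambda>t. fst (\<phi> t))"
  define th where "th = (\<lambda>t. fst (snd (\<phi> t)))"
  note d = rhs_solution_component_derivatives[OF sol]
  text \<open>The equation for u forces x theta = 0 wherever u vanishes identically.\<close>
  have x_th: "x t * th t = 0" if "t \<in> U" for t
    using has_real_derivative_locally_constant[OF \<open>open U\<close> that u0 d(3)[OF that]] u0[OF that] \<open>\<beta> \<noteq> 0\<close>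
    unfolding x_def th_def by simp
  have "continuous_on U \<phi>" by (rule solution_continuous_on[OF sol])
  then have cont: "continuous_on U x" "continuous_on U th"
    unfolding x_def th_def by (auto intro: continuous_intros)
  have "th s = 0 \<and> (x s = 0 \<or> x s = 1 \<or> x s = -1)"
  proof (cases "x s = 0")
    case False
    define V where "V = U \<inter> x -` (- {0})"
    have V: "open V" "s \<in> V"
      unfolding V_def using continuous_open_preimage[OF cont(1) \<open>open U\<close>, of "- {0}"] False \<open>s \<in> U\<close>
      by auto
    have th0: "fst (snd (\<phi> t)) = 0" if "t \<in> V" for t
      using x_th[of t] that unfolding V_def th_def by auto
    have "- lam * th s - x s * snd (snd (\<phi> s)) + x s - x s ^ 3 = 0"
      using has_real_derivative_locally_constant[OF V th0 d(2)[OF \<open>s \<in> U\<close>]]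
      unfolding x_def th_def .
    moreover have "th s = 0" using th0[OF V(2)] unfolding th_def .
    ultimately have "x s * (1 - x s) * (1 + x s) = 0"
      using u0[OF \<open>s \<in> U\<close>] by (simp add: algebra_simps power3_eq_cube)
    then show ?thesis using False \<open>th s = 0\<close> by auto
  next
    case True
    have "th s = 0"
    proof (rule ccontr)
      assume "th s \<noteq> 0"
      define V where "V = U \<inter> th -` (- {0})"
      have V: "open V" "s \<in> V"
        unfolding V_def using continuous_open_preimage[OF cont(2) \<open>open U\<close>, of "- {0}"] \<open>th s \<noteq> 0\<close> \<open>s \<in> U\<close>
        by auto
      have x0: "fst (\<phi> t) = 0" if "t \<in> V" for t using x_th[of t] that unfolding V_def x_def by auto
      have "th s = 0"
        using has_real_derivative_locally_constant[OF V x0 d(1)[OF \<open>s \<in> U\<close>]] unfolding th_def .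
      with \<open>th s \<noteq> 0\<close> show False by contradiction
    qed
    then show ?thesis using True by simp
  qed
  then show ?thesis using u0[OF \<open>s \<in> U\<close>] unfolding x_def th_def by (auto simp: prod_eq_iff)
qed

lemma rest_point_if_energy_constant:
  fixes \<phi> :: "real \<Rightarrow> real \<times> real \<times> real"
  assumes "open U" "s \<in> U" "\<alpha> \<noteq> 0" "\<beta> \<noteq> 0"
    and sol: "\<And>t. t \<in> U \<Longrightarrow> (\<phi> has_vector_derivative rhs \<alpha> 0 \<beta> (\<phi> t)) (at t)"
    and const: "\<And>t. t \<in> U \<Longrightarrow> energy \<beta> (\<phi> t) = c"
  shows "\<phi> s \<in> {0, (1, 0, 0), (-1, 0, 0)}"
proof (rule rest_point_if_u_vanishes[OF assms(1,2,4) sol])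
  fix t assume "t \<in> U"
  have "\<alpha> / \<beta> * (snd (snd (\<phi> t)))\<^sup>2 = 0"
    using has_real_derivative_locally_constant[OF \<open>open U\<close> \<open>t \<in> U\<close> const
        energy_has_real_derivative[OF sol[OF \<open>t \<in> U\<close>] \<open>\<beta> \<noteq> 0\<close>]]
    by simp
  then show "snd (snd (\<phi> t)) = 0" using \<open>\<alpha> \<noteq> 0\<close> \<open>\<beta> \<noteq> 0\<close> by simp
qed

section \<open>Separatrices\<close>

lemma energy_nondecreasing:
  fixes \<phi> :: "real \<Rightarrow> real \<times> real \<times> real"
  assumes "\<alpha> \<ge> 0" "\<beta> > 0"
    and sol: "\<And>t. (\<phi> has_vector_derivative rhs \<alpha> 0 \<beta> (\<phi> t)) (at t)"
    and "s \<le> t"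
  shows "energy \<beta> (\<phi> s) \<le> energy \<beta> (\<phi> t)"
proof (rule DERIV_nonneg_imp_nondecreasing[OF \<open>s \<le> t\<close>])
  fix r
  have "((\<lambda>t. energy \<beta> (\<phi> t)) has_real_derivative \<alpha> / \<beta> * (snd (snd (\<phi> r)))\<^sup>2) (at r)"
    using energy_has_real_derivative[OF sol, of r] \<open>\<beta> > 0\<close> by simp
  moreover have "\<alpha> / \<beta> * (snd (snd (\<phi> r)))\<^sup>2 \<ge> 0" using assms(1,2) by simp
  ultimately show "\<exists>d. ((\<lambda>t. energy \<beta> (\<phi> t)) has_real_derivative d) (at r) \<and> 0 \<le> d" by blast
qed

lemma separatrix_positive_energy:
  fixes \<phi> :: "real \<Rightarrow> real \<times> real \<times> real"
  assumes "\<alpha> > 0" "\<beta> > 0"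
    and sol: "\<And>t. (\<phi> has_vector_derivative rhs \<alpha> 0 \<beta> (\<phi> t)) (at t)"
    and nontrivial: "\<exists>t. \<phi> t \<noteq> 0"
    and lim_x: "((\<lambda>t. fst (\<phi> t)) \<longlongrightarrow> 0) at_bot"
    and lim_theta: "((\<lambda>t. fst (snd (\<phi> t))) \<longlongrightarrow> 0) at_bot"
    and lim_u: "((\<lambda>t. snd (snd (\<phi> t))) \<longlongrightarrow> 0) at_bot"
  obtains t where "energy \<beta> (\<phi> t) > 0"
proof -
  have "((\<lambda>t. (fst (\<phi> t), fst (snd (\<phi> t)), snd (snd (\<phi> t)))) \<longlongrightarrow> (0, 0, 0)) at_bot"
    by (intro tendsto_Pair lim_x lim_theta lim_u)
  then have "(\<phi> \<longlongrightarrow> 0) at_bot" by (simp add: zero_prod_def)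
  then have "((\<lambda>t. energy \<beta> (\<phi> t)) \<longlongrightarrow> energy \<beta> 0) at_bot"
    using \<open>\<beta> > 0\<close> by (intro isCont_tendsto_compose[OF isCont_energy]) auto
  then have E_lim: "((\<lambda>t. energy \<beta> (\<phi> t)) \<longlongrightarrow> 0) at_bot" by simp
  have E_nonneg: "energy \<beta> (\<phi> t) \<ge> 0" for t
  proof (rule tendsto_upperbound[OF E_lim])
    show "eventually (\<lambda>s. energy \<beta> (\<phi> s) \<le> energy \<beta> (\<phi> t)) at_bot"
      unfolding eventually_at_bot_linorder
      using energy_nondecreasing[OF less_imp_le[OF \<open>\<alpha> > 0\<close>] \<open>\<beta> > 0\<close> sol] by blast
  qed simp
  show thesis
  proof (rule ccontr)
    assume "\<not> thesis"
    then have not_pos: "\<not> energy \<beta> (\<phi> t) > 0" for t using that by blast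
    have E0: "energy \<beta> (\<phi> t) = 0" for t using not_pos[of t] E_nonneg[of t] by linarith
    have "\<phi> t = 0" for t
    proof -
      have "\<phi> t \<in> {0, (1, 0, 0), (-1, 0, 0)}"
        by (rule rest_point_if_energy_constant[OF open_UNIV UNIV_I _ _ sol E0]) (use assms in auto)
      then show ?thesis using E0[of t] by auto
    qed
    with nontrivial show False by blast
  qed
qed

lemma norm_tends_to_infinity_if_energy_positive:
  fixes \<phi> :: "real \<Rightarrow> real \<times> real \<times> real"
  assumes "\<alpha> > 0" "\<beta> > 0"
    and sol: "\<And>t. (\<phi> has_vector_derivative rhs \<alpha> 0 \<beta> (\<phi> t)) (at t)"
    and t1: "energy \<beta> (\<phi> t1) > 0"
  shows "filterlim (\<lambda>t. norm (\<phi> t)) at_top at_top"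
proof (rule ccontr)
  assume "\<not> filterlim (\<lambda>t. norm (\<phi> t)) at_top at_top"
  then obtain Z where "\<not> eventually (\<lambda>t. Z \<le> norm (\<phi> t)) at_top"
    unfolding filterlim_at_top by blast
  then have "\<forall>n::nat. \<exists>t. real n \<le> t \<and> norm (\<phi> t) < Z"
    unfolding eventually_at_top_linorder by (auto simp: not_le)
  then obtain T where T: "\<And>n. real n \<le> T n" "\<And>n. norm (\<phi> (T n)) < Z" by metis
  have "\<forall>n. \<phi> (T n) \<in> cball 0 Z" using T(2) by (simp add: less_imp_le)
  then obtain q r where "strict_mono r" and lim: "((\<lambda>n. \<phi> (T n)) \<circ> r) \<longlonglongrightarrow> q"
    by (rule seq_compactE[OF compact_imp_seq_compact[OF compact_cball]])
  define tn where "tn = T \<circ> r"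
  have tn_ge: "real n \<le> tn n" for n
    using T(1)[of "r n"] seq_suble[OF \<open>strict_mono r\<close>, of n] unfolding tn_def by simp
  have tn: "filterlim tn at_top sequentially"
    by (rule filterlim_at_top_mono[OF filterlim_real_sequentially]) (use tn_ge in simp)
  have lim: "(\<lambda>n. \<phi> (tn n)) \<longlonglongrightarrow> q" using lim unfolding tn_def comp_def .
  have E_cont: "isCont (energy \<beta>) p" for p using isCont_energy \<open>\<beta> > 0\<close> by simp
  have E_mono: "\<And>s t. s \<le> t \<Longrightarrow> energy \<beta> (\<phi> s) \<le> energy \<beta> (\<phi> t)"
    using energy_nondecreasing[OF less_imp_le[OF \<open>\<alpha> > 0\<close>] \<open>\<beta> > 0\<close> sol] .
  have "energy \<beta> q \<ge> energy \<beta> (\<phi> t1)"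
  proof (rule tendsto_lowerbound)
    show "(\<lambda>n. energy \<beta> (\<phi> (tn n))) \<longlonglongrightarrow> energy \<beta> q"
      by (rule isCont_tendsto_compose[OF E_cont lim])
    have "eventually (\<lambda>n. t1 \<le> tn n) sequentially" using tn by (simp add: filterlim_at_top)
    then show "eventually (\<lambda>n. energy \<beta> (\<phi> t1) \<le> energy \<beta> (\<phi> (tn n))) sequentially"
      by eventually_elim (rule E_mono)
  qed simp
  then have "energy \<beta> q > 0" using t1 by simp
  obtain \<delta> z where "\<delta> > 0" "z 0 = q"
    and z_sol: "\<And>t. t \<in> {0<..<\<delta>} \<Longrightarrow> (z has_vector_derivative rhs \<alpha> 0 \<beta> (z t)) (at t)"
    and z_energy: "\<And>t. t \<in> {0..\<delta>} \<Longrightarrow> energy \<beta> (z t) = energy \<beta> q"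
    using level_constant_through_limit_point[where f="rhs \<alpha> 0 \<beta>" and V="energy \<beta>",
        OF rhs_locally_lipschitz rhs_growth _ sol E_cont E_mono tn lim]
    by (auto simp: add_pos_nonneg)
  have "z (\<delta> / 2) \<in> {0, (1, 0, 0), (-1, 0, 0)}"
    by (rule rest_point_if_energy_constant[OF open_greaterThanLessThan _ _ _ z_sol z_energy])
      (use \<open>\<delta> > 0\<close> \<open>\<alpha> > 0\<close> \<open>\<beta> > 0\<close> in auto)
  moreover have "energy \<beta> (z (\<delta> / 2)) = energy \<beta> q" using z_energy \<open>\<delta> > 0\<close> by simp
  ultimately show False using \<open>energy \<beta> q > 0\<close> by auto
qed

theorem lemma1:
  fixes \<alpha> lam \<beta> :: real and b :: ereal and \<phi> :: "real \<Rightarrow> real \<times> real \<times> real"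
  assumes "\<alpha> > 0" and "lam = 0" and "\<beta> > 0"
    and sol: "solves_on \<alpha> lam \<beta> \<phi> {t. ereal t < b}"
    and maximal: "\<forall>c \<psi>. c > b \<longrightarrow> solves_on \<alpha> lam \<beta> \<psi> {t. ereal t < c}
                     \<longrightarrow> \<not> (\<forall>t. ereal t < b \<longrightarrow> \<psi> t = \<phi> t)"
    and nontrivial: "\<exists>t. ereal t < b \<and> \<phi> t \<noteq> 0"
    and lim_x: "((\<lambda>t. fst (\<phi> t)) \<longlongrightarrow> 0) at_bot"
    and lim_theta: "((\<lambda>t. fst (snd (\<phi> t))) \<longlongrightarrow> 0) at_bot"
    and lim_u: "((\<lambda>t. snd (snd (\<phi> t))) \<longlongrightarrow> 0) at_bot"
  shows "filterlim (\<lambda>t. norm (\<phi> t)) at_top (right_end b)"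
proof (cases b)
  case (real c)
  have "filterlim (\<lambda>t. norm (\<phi> t)) at_top (at_left c)"
  proof (rule solution_tends_to_infinity_at_finite_end[OF rhs_locally_lipschitz rhs_growth])
    show "0 < 7 + \<bar>lam\<bar> + \<bar>\<alpha>\<bar> + 2 * \<bar>\<beta>\<bar>" by (simp add: add_pos_nonneg)
    show "(\<phi> has_vector_derivative rhs \<alpha> lam \<beta> (\<phi> t)) (at t)" if "t < c" for t
      using sol that unfolding solves_on_def real by simp
    fix c' \<psi> assume "c < c'" "\<And>t. t < c' \<Longrightarrow> (\<psi> has_vector_derivative rhs \<alpha> lam \<beta> (\<psi> t)) (at t)"
    then show "\<exists>t<c. \<psi> t \<noteq> \<phi> t"
      using maximal[rule_format, of "ereal c'" \<psi>] unfolding solves_on_def real by auto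
  qed
  then show ?thesis unfolding right_end_def real by simp
next
  case PInf
  have sol': "(\<phi> has_vector_derivative rhs \<alpha> 0 \<beta> (\<phi> t)) (at t)" for t
    using sol \<open>lam = 0\<close> unfolding solves_on_def PInf by simp
  obtain t1 where "energy \<beta> (\<phi> t1) > 0"
    using separatrix_positive_energy[OF \<open>\<alpha> > 0\<close> \<open>\<beta> > 0\<close> sol' _ lim_x lim_theta lim_u] nontrivial
    by blast
  then show ?thesis
    using norm_tends_to_infinity_if_energy_positive[OF \<open>\<alpha> > 0\<close> \<open>\<beta> > 0\<close> sol'] unfolding right_end_def PInf by simp
next
  case MInf
  then show ?thesis using nontrivial by simp
qed

end
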